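(* Fix $n\ge1$ and all parameters other than $\gamma_{\rm P}$, and let $(z^{Q,\star}(\gamma_{\rm P}),z^{S,\star}(\gamma_{\rm P}))$ denote the unique maximiser of $f$. There exists $\overline\gamma_{{\rm P},n}>0$ such that for every $\gamma_{\rm P}\in(0,\overline\gamma_{{\rm P},n})$: $z^{Q,i,i,\star}(\gamma_{\rm P})>0$ for all $i$; $\mathrm{sgn}(z^{S,i,\star}(\gamma_{\rm P}))=-\mathrm{sgn}(\rho_i)$ for every $i$ with $\rho_i\ne0$; and $\mathrm{sgn}(z^{Q,i,j,\star}(\gamma_{\rm P}))=\mathrm{sgn}(\rho_i\rho_j)$ for every $i\ne j$ with $\rho_i\rho_j\ne0$.
   Context: Fix an integer $n\ge1$ and parameters $\sigma>0$, $\gamma_{\rm P}>0$, and for each $i\in\{1,\dots,n\}$: $c_i>0$, $\gamma_i>0$, $\nu_i>0$, $\rho_i\in(-1,1)$. Write $\nu=(\nu_1,\dots,\nu_n)^\top$, $\rho=(\rho_1,\dots,\rho_n)^\top$. The variables are a matrix $z^Q=(z^{Q,i,j})_{i,j}\in\mathbb{R}^{n\times n}$ ($i$ row, $j$ column) and a vector $z^S=(z^{S,1},\dots,z^{S,n})^\top\in\mathbb{R}^n$. Define $f:\mathbb{R}^{n\times n}\times\mathbb{R}^n\to\mathbb{R}$ by $$f(z^Q,z^S)=-\frac1n\sum_{i=1}^n\Big(\frac{(z^{Q,i,i})^2}{2c_i}+\frac{\gamma_i}{2}\sum_{j=1}^n\nu_j^2(z^{Q,i,j})^2+\frac{\gamma_i\sigma^2}{2}(z^{S,i})^2+\frac{\gamma_i\sigma}{\sqrt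 n}z^{S,i}\sum_{j=1}^n\rho_j\nu_jz^{Q,i,j}-\frac{z^{Q,i,i}}{c_i}\Big)-\frac{\gamma_{\rm P}}{2n^2}\sum_{i=1}^n\Big(\Big(\nu_i-\nu_i\sum_{j=1}^nz^{Q,j,i}-\frac{\rho_i\sigma}{\sqrt n}\sum_{j=1}^nz^{S,j}\Big)^2+\frac{(1-\rho_i^2)\sigma^2}{n}\Big(\sum_{j=1}^nz^{S,j}\Big)^2\Big).$$ For each $\gamma_{\rm P}>0$, $f$ has a unique global maximiser. *)

theory Defs
  imports "HOL-Analysis.Analysis"
begin

text \<open>Index set {1..n} is rendered as a finite type 'n with CARD('n) = n.
  z^Q is a matrix real^'n^'n with zQ $ i $ j = z^{Q,i,j} (i row, j column).\<close>

definition obj_f ::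
  "real^'n \<Rightarrow> real^'n \<Rightarrow> real^'n \<Rightarrow> real^'n \<Rightarrow> real \<Rightarrow> real
     \<Rightarrow> real^'n^'n \<Rightarrow> real^'n \<Rightarrow> real" where
  "obj_f c gam nu rho sig gP zQ zS =
    (let n = real CARD('n) in
     - (1 / n) * (\<Sum>i\<in>UNIV.
          (zQ $ i $ i)^2 / (2 * c $ i)
        + gam $ i / 2 * (\<Sum>j\<in>UNIV. (nu $ j)^2 * (zQ $ i $ j)^2)
        + gam $ i * sig^2 / 2 * (zS $ i)^2
        + gam $ i * sig / sqrt n * zS $ i * (\<Sum>j\<in>UNIV. rho $ j * nu $ j * zQ $ i $ j)
        - zQ $ i $ i / c $ i)
     - gP / (2 * n^2) * (\<Sum>i\<in>UNIV.
          (nu $ i - nu $ i * (\<Sum>j\<in>UNIV. zQ $ j $ i)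
             - rho $ i * sig / sqrt n * (\<Sum>j\<in>UNIV. zS $ j))^2
        + (1 - (rho $ i)^2) * sig^2 / n * (\<Sum>j\<in>UNIV. zS $ j)^2))"

definition is_global_max ::
  "real^'n \<Rightarrow> real^'n \<Rightarrow> real^'n \<Rightarrow> real^'n \<Rightarrow> real \<Rightarrow> real
     \<Rightarrow> real^'n^'n \<Rightarrow> real^'n \<Rightarrow> bool" where
  "is_global_max c gam nu rho sig gP zQ zS \<longleftrightarrow>
     (\<forall>zQ' zS'. obj_f c gam nu rho sig gP zQ' zS' \<le> obj_f c gam nu rho sig gP zQ zS)"

end

(* For gP = 0 the objective splits into n independent concave quadratic problems, one per
   row (z^{Q,i,.}, z^{S,i}); their maximiser (zQ0, zS0) is explicit and has exactly the claimed
   sign pattern. Expanded around this critical point, each row cost exceeds its value there by its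
   quadratic part, which dominates gam_i eps/2 times the squared deviation once all |rho_j| are
   at most 1 - eps. Comparing f at a maximiser with f at (zQ0, zS0), and dropping the non-negative
   penalty at the maximiser, bounds every squared deviation by a constant times gP, so for small
   gP each non-zero entry of (zQ0, zS0) keeps its sign. *)

theory Submission
  imports Defs
begin

lemma sgn_eq_if_sq_dist_less:
  fixes y y0 :: real
  assumes "(y - y0)^2 < y0^2"
  shows "sgn y = sgn y0"
proof -
  have "y * y < 2 * (y * y0)" using assms by (simp add: power2_eq_square algebra_simps)
  moreover have "0 \<le> y * y" by simp
  ultimately have "0 < y * y0" by linarith
  then show ?thesis by (auto simp: zero_less_mult_iff sgn_if)
qed

lemma eventually_sq_dist_le_imp_sgn_eq:
  fixes y0 K :: real
  assumes "y0 \<noteq> 0"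
  shows "\<forall>\<^sub>F g in at_right 0. \<forall>y. (y - y0)^2 \<le> g * K \<longrightarrow> sgn y = sgn y0"
proof -
  have "((\<lambda>g. g * K) \<longlongrightarrow> 0 * K) (at_right 0)" by (intro tendsto_intros)
  then have "\<forall>\<^sub>F g in at_right 0. g * K < y0^2" using assms by (intro order_tendstoD) auto
  then show ?thesis by eventually_elim (auto intro: sgn_eq_if_sq_dist_less)
qed

lemma cross_term_lower_bound:
  fixes x t p eps :: real
  assumes "\<bar>p\<bar> \<le> 1 - eps"
  shows "eps * (x^2 + t^2) \<le> x^2 + 2 * t * p * x + t^2"
proof -
  have "2 * \<bar>x\<bar> * \<bar>t\<bar> \<le> x^2 + t^2" using sum_squares_bound[of "\<bar>x\<bar>" "\<bar>t\<bar>"] by simp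
  then have "\<bar>p\<bar> * (2 * \<bar>x\<bar> * \<bar>t\<bar>) \<le> (1 - eps) * (x^2 + t^2)"
    using assms by (intro mult_mono) auto
  moreover have "- (2 * t * p * x) \<le> \<bar>p\<bar> * (2 * \<bar>x\<bar> * \<bar>t\<bar>)"
    by (simp add: abs_mult[symmetric] mult_ac)
  ultimately show ?thesis by (simp add: algebra_simps)
qed

locale contract_model =
  fixes c gam nu rho :: "real^'n" and sig :: real
  assumes sig_pos: "sig > 0"
    and c_pos: "\<And>i. c $ i > 0" and gam_pos: "\<And>i. gam $ i > 0" and nu_pos: "\<And>i. nu $ i > 0"
    and rho_bounds: "\<And>i. -1 < rho $ i \<and> rho $ i < 1"
begin

definition row_quad :: "'n \<Rightarrow> real^'n \<Rightarrow> real \<Rightarrow> real" where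
  "row_quad i d e =
      (d $ i)^2 / (2 * c $ i)
    + gam $ i / 2 * (\<Sum>j\<in>UNIV. (nu $ j)^2 * (d $ j)^2)
    + gam $ i * sig^2 / 2 * e^2
    + gam $ i * sig / sqrt (real CARD('n)) * e * (\<Sum>j\<in>UNIV. rho $ j * nu $ j * d $ j)"

definition row_cost :: "'n \<Rightarrow> real^'n \<Rightarrow> real \<Rightarrow> real" where
  "row_cost i r s = row_quad i r s - r $ i / c $ i"

definition grad_Q :: "'n \<Rightarrow> real^'n \<Rightarrow> real \<Rightarrow> 'n \<Rightarrow> real" where
  "grad_Q i r s j = (if j = i then (r $ i - 1) / c $ i else 0)
     + gam $ i * nu $ j * (nu $ j * r $ j + sig * s * rho $ j / sqrt (real CARD('n)))"

definition grad_S :: "'n \<Rightarrow> real^'n \<Rightarrow> real \<Rightarrow> real" where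
  "grad_S i r s = gam $ i * sig * (sig * s + (\<Sum>j\<in>UNIV. rho $ j * nu $ j * r $ j) / sqrt (real CARD('n)))"

lemma row_cost_taylor:
  "row_cost i r s = row_cost i r0 s0 + (\<Sum>j\<in>UNIV. (r $ j - r0 $ j) * grad_Q i r0 s0 j)
     + (s - s0) * grad_S i r0 s0 + row_quad i (r - r0) (s - s0)"
proof -
  define d where "d = r - r0"
  define k where "k = sqrt (real CARD('n))"
  define A where "A = (\<Sum>j\<in>UNIV. (nu $ j)^2 * (r0 $ j)^2)"
  define B where "B = (\<Sum>j\<in>UNIV. (nu $ j)^2 * r0 $ j * d $ j)"
  define C where "C = (\<Sum>j\<in>UNIV. (nu $ j)^2 * (d $ j)^2)"
  define R0 where "R0 = (\<Sum>j\<in>UNIV. rho $ j * nu $ j * r0 $ j)"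
  define Rd where "Rd = (\<Sum>j\<in>UNIV. rho $ j * nu $ j * d $ j)"
  have r: "r = r0 + d" by (simp add: d_def)
  have dj: "r $ j - r0 $ j = d $ j" for j by (simp add: d_def)
  have sq: "(\<Sum>j\<in>UNIV. (nu $ j)^2 * (r $ j)^2) = A + 2 * B + C"
    by (simp add: A_def B_def C_def r sum.distrib sum_distrib_left power2_eq_square algebra_simps)
  have lin: "(\<Sum>j\<in>UNIV. rho $ j * nu $ j * r $ j) = R0 + Rd"
    by (simp add: R0_def Rd_def r sum.distrib algebra_simps)
  have "(\<Sum>j\<in>UNIV. d $ j * (if j = i then (r0 $ i - 1) / c $ i else 0)) = d $ i * (r0 $ i - 1) / c $ i"
    by (simp add: if_distrib[of "\<lambda>x. _ * x"] cong: if_cong)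
  then have grad: "(\<Sum>j\<in>UNIV. d $ j * grad_Q i r0 s0 j) =
      d $ i * (r0 $ i - 1) / c $ i + gam $ i * B + gam $ i * sig * s0 / k * Rd"
    by (simp add: grad_Q_def B_def Rd_def k_def sum.distrib sum_distrib_left
        power2_eq_square algebra_simps)
  have "k > 0" by (simp add: k_def)
  with c_pos[of i] show ?thesis
    unfolding row_cost_def row_quad_def grad_S_def dj grad sq lin d_def[symmetric] k_def[symmetric]
      A_def[symmetric] C_def[symmetric] R0_def[symmetric] Rd_def[symmetric]
    by (simp add: r field_simps power2_eq_square)
qed

lemma row_quad_lower_bound:
  assumes "\<And>j. \<bar>rho $ j\<bar> \<le> 1 - eps"
  shows "gam $ i * eps / 2 * ((\<Sum>j\<in>UNIV. (nu $ j)^2 * (d $ j)^2) + sig^2 * e^2) \<le> row_quad i d e"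
proof -
  define k where "k = sqrt (real CARD('n))"
  define t where "t = sig * e / k"
  have nt: "real CARD('n) * t^2 = sig^2 * e^2"
    by (simp add: t_def k_def power_divide power_mult_distrib)
  have lhs: "(\<Sum>j\<in>UNIV. (nu $ j * d $ j)^2 + t^2)
      = (\<Sum>j\<in>UNIV. (nu $ j)^2 * (d $ j)^2) + sig^2 * e^2"
    by (simp add: sum.distrib power_mult_distrib nt)
  have rhs: "(\<Sum>j\<in>UNIV. (nu $ j * d $ j)^2 + 2 * t * rho $ j * (nu $ j * d $ j) + t^2)
      = (\<Sum>j\<in>UNIV. (nu $ j)^2 * (d $ j)^2) + 2 * t * (\<Sum>j\<in>UNIV. rho $ j * nu $ j * d $ j) + sig^2 * e^2"
    by (simp add: sum.distrib sum_distrib_left power_mult_distrib nt mult.assoc)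
  have "eps * (\<Sum>j\<in>UNIV. (nu $ j * d $ j)^2 + t^2)
      \<le> (\<Sum>j\<in>UNIV. (nu $ j * d $ j)^2 + 2 * t * rho $ j * (nu $ j * d $ j) + t^2)"
    unfolding sum_distrib_left by (intro sum_mono cross_term_lower_bound assms)
  then have bound: "eps * ((\<Sum>j\<in>UNIV. (nu $ j)^2 * (d $ j)^2) + sig^2 * e^2)
      \<le> (\<Sum>j\<in>UNIV. (nu $ j)^2 * (d $ j)^2) + 2 * t * (\<Sum>j\<in>UNIV. rho $ j * nu $ j * d $ j)
          + sig^2 * e^2"
    unfolding lhs rhs .
  have "gam $ i * eps / 2 * ((\<Sum>j\<in>UNIV. (nu $ j)^2 * (d $ j)^2) + sig^2 * e^2)
      = gam $ i / 2 * (eps * ((\<Sum>j\<in>UNIV. (nu $ j)^2 * (d $ j)^2) + sig^2 * e^2))" by simp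
  also have "\<dots> \<le> gam $ i / 2 * ((\<Sum>j\<in>UNIV. (nu $ j)^2 * (d $ j)^2)
          + 2 * t * (\<Sum>j\<in>UNIV. rho $ j * nu $ j * d $ j) + sig^2 * e^2)"
    using bound gam_pos[of i] by (intro mult_left_mono) auto
  also have "\<dots> \<le> (d $ i)^2 / (2 * c $ i) + \<dots>" using c_pos[of i] by simp
  also have "\<dots> = row_quad i d e"
    unfolding row_quad_def t_def k_def by (simp add: algebra_simps)
  finally show ?thesis .
qed

text \<open>The maximiser for gP = 0. The first-order conditions of row i in z^{Q,i,j}, j \<noteq> i, give
  nu_j z^{Q,i,j} = - sig rho_j z^{S,i} / sqrt n; substituting into the remaining two conditions
  determines z^{S,i} and z^{Q,i,i}, with M_rho i = n - (sum of rho_j^2 over j \<noteq> i).\<close>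

definition M_rho :: "'n \<Rightarrow> real" where
  "M_rho i = real CARD('n) - (\<Sum>j\<in>UNIV. (rho $ j)^2) + (rho $ i)^2"

definition zQ0_diag :: "'n \<Rightarrow> real" where
  "zQ0_diag i = M_rho i / (M_rho i + c $ i * gam $ i * (nu $ i)^2 * (real CARD('n) - (\<Sum>j\<in>UNIV. (rho $ j)^2)))"

definition zQ0 :: "real^'n^'n" where
  "zQ0 = (\<chi> i j. if j = i then zQ0_diag i else rho $ i * rho $ j * nu $ i * zQ0_diag i / (M_rho i * nu $ j))"

definition zS0 :: "real^'n" where
  "zS0 = (\<chi> i. - rho $ i * nu $ i * zQ0_diag i * sqrt (real CARD('n)) / (sig * M_rho i))"

lemma sum_rho_sq_less_card: "(\<Sum>j\<in>UNIV. (rho $ j)^2) < real CARD('n)"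
proof -
  have "(\<Sum>j\<in>UNIV. (rho $ j)^2) < (\<Sum>j::'n\<in>UNIV. 1)"
    using rho_bounds by (intro sum_strict_mono) (auto simp: abs_square_less_1 abs_less_iff)
  then show ?thesis by simp
qed

lemma M_rho_pos: "M_rho i > 0"
  using sum_rho_sq_less_card zero_le_power2[of "rho $ i"] unfolding M_rho_def by linarith

lemma zQ0_diag_pos: "zQ0_diag i > 0"
  using M_rho_pos[of i] sum_rho_sq_less_card c_pos[of i] gam_pos[of i]
  unfolding zQ0_diag_def by (simp add: add_pos_nonneg)

lemma sum_rho_nu_zQ0:
  "(\<Sum>j\<in>UNIV. rho $ j * nu $ j * zQ0 $ i $ j) = rho $ i * nu $ i * zQ0_diag i * real CARD('n) / M_rho i"
proof -
  define a where "a = rho $ i * nu $ i * zQ0_diag i / M_rho i"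
  have "(\<Sum>j\<in>UNIV. rho $ j * nu $ j * zQ0 $ i $ j) =
      (\<Sum>j\<in>UNIV. a * (rho $ j)^2 + (if j = i then a * (M_rho i - (rho $ i)^2) else 0))"
    using nu_pos M_rho_pos[of i]
    by (intro sum.cong) (auto simp: zQ0_def a_def field_simps power2_eq_square less_imp_neq[symmetric])
  also have "\<dots> = a * M_rho i + a * (\<Sum>j\<in>UNIV. (rho $ j)^2) - a * (rho $ i)^2"
    by (simp add: sum.distrib sum_distrib_left algebra_simps)
  also have "\<dots> = a * real CARD('n)"
    by (simp add: M_rho_def algebra_simps)
  finally show ?thesis by (simp add: a_def)
qed

lemma zQ0_diag_first_order:
  "(zQ0_diag i - 1) / c $ i + gam $ i * (nu $ i)^2 * zQ0_diag i * (M_rho i - (rho $ i)^2) / M_rho i = 0"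
proof -
  define M where "M = M_rho i"
  define T where "T = M - (rho $ i)^2"
  define D where "D = M + c $ i * gam $ i * (nu $ i)^2 * T"
  have "M > 0" using M_rho_pos by (simp add: M_def)
  have "T \<ge> 0" using sum_rho_sq_less_card by (simp add: T_def M_def M_rho_def)
  then have "D > 0" using \<open>M > 0\<close> c_pos[of i] gam_pos[of i] by (simp add: D_def add_pos_nonneg)
  have q: "zQ0_diag i = M / D" by (simp add: zQ0_diag_def D_def T_def M_def M_rho_def)
  have "zQ0_diag i - 1 = (M - D) / D" using \<open>D > 0\<close> by (simp add: q diff_divide_distrib)
  also have "M - D = - (c $ i * (gam $ i * (nu $ i)^2 * T))" by (simp add: D_def)
  finally have "(zQ0_diag i - 1) / c $ i = - gam $ i * (nu $ i)^2 * T / D" using c_pos[of i] by simp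
  moreover have "gam $ i * (nu $ i)^2 * zQ0_diag i * T / M = gam $ i * (nu $ i)^2 * T / D"
    using \<open>M > 0\<close> unfolding q by simp
  ultimately show ?thesis by (simp add: T_def M_def)
qed

lemma zQ0_zS0_critical:
  shows "grad_Q i (zQ0 $ i) (zS0 $ i) j = 0" and "grad_S i (zQ0 $ i) (zS0 $ i) = 0"
proof -
  define k where "k = sqrt (real CARD('n))"
  define M where "M = M_rho i"
  define q where "q = zQ0_diag i"
  have "M > 0" "k > 0" "k * k = real CARD('n)" using M_rho_pos by (simp_all add: M_def k_def)
  note pos = this sig_pos nu_pos[of j] c_pos[of i] gam_pos[of i]
  have s0: "zS0 $ i = - rho $ i * nu $ i * q * k / (sig * M)"
    by (simp add: zS0_def q_def M_def k_def)
  show "grad_S i (zQ0 $ i) (zS0 $ i) = 0"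
    using pos unfolding grad_S_def sum_rho_nu_zQ0 s0
    by (simp add: q_def M_def k_def[symmetric] field_simps)
  show "grad_Q i (zQ0 $ i) (zS0 $ i) j = 0"
  proof (cases "j = i")
    case True
    with zQ0_diag_first_order[of i] pos show ?thesis
      by (simp add: grad_Q_def s0 zQ0_def q_def[symmetric] M_def[symmetric] k_def[symmetric]
          field_simps power2_eq_square)
  next
    case False
    with pos show ?thesis
      by (simp add: grad_Q_def s0 zQ0_def q_def[symmetric] M_def[symmetric] k_def[symmetric]
          field_simps)
  qed
qed

lemma zQ0_diag_eq: "zQ0 $ i $ i = zQ0_diag i"
  by (simp add: zQ0_def)

lemma sgn_zQ0_off_diag:
  assumes "i \<noteq> j"
  shows "sgn (zQ0 $ i $ j) = sgn (rho $ i * rho $ j)"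
  using assms zQ0_diag_pos[of i] M_rho_pos[of i] nu_pos[of i] nu_pos[of j]
  by (simp add: zQ0_def sgn_mult sgn_divide)

lemma sgn_zS0: "sgn (zS0 $ i) = - sgn (rho $ i)"
  using zQ0_diag_pos[of i] M_rho_pos[of i] nu_pos[of i] sig_pos
  by (simp add: zS0_def sgn_mult sgn_divide sgn_minus)

definition penalty :: "real^'n^'n \<Rightarrow> real^'n \<Rightarrow> real" where
  "penalty zQ zS = (\<Sum>i\<in>UNIV.
      (nu $ i - nu $ i * (\<Sum>j\<in>UNIV. zQ $ j $ i)
         - rho $ i * sig / sqrt (real CARD('n)) * (\<Sum>j\<in>UNIV. zS $ j))^2
    + (1 - (rho $ i)^2) * sig^2 / real CARD('n) * (\<Sum>j\<in>UNIV. zS $ j)^2)"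

lemma penalty_nonneg: "penalty zQ zS \<ge> 0"
proof -
  have "(rho $ i)^2 \<le> 1" for i
    using rho_bounds[of i] by (simp add: abs_square_le_1 abs_le_iff)
  then show ?thesis unfolding penalty_def by (intro sum_nonneg add_nonneg_nonneg) auto
qed

lemma obj_f_eq:
  "obj_f c gam nu rho sig gP zQ zS =
     - (1 / real CARD('n)) * (\<Sum>i\<in>UNIV. row_cost i (zQ $ i) (zS $ i))
     - gP / (2 * (real CARD('n))^2) * penalty zQ zS"
  unfolding obj_f_def row_cost_def row_quad_def penalty_def Let_def by simp

lemma global_max_row_quad_sum_le:
  assumes "gP \<ge> 0" and "is_global_max c gam nu rho sig gP zQ zS"
    and "\<And>i j. grad_Q i (zQ' $ i) (zS' $ i) j = 0" and "\<And>i. grad_S i (zQ' $ i) (zS' $ i) = 0"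
  shows "(\<Sum>i\<in>UNIV. row_quad i (zQ $ i - zQ' $ i) (zS $ i - zS' $ i))
           \<le> gP * penalty zQ' zS' / (2 * real CARD('n))"
proof -
  define N where "N = real CARD('n)"
  define Sq where "Sq = (\<Sum>i\<in>UNIV. row_quad i (zQ $ i - zQ' $ i) (zS $ i - zS' $ i))"
  have "N > 0" by (simp add: N_def)
  have "row_cost i (zQ $ i) (zS $ i)
      = row_cost i (zQ' $ i) (zS' $ i) + row_quad i (zQ $ i - zQ' $ i) (zS $ i - zS' $ i)" for i
    using row_cost_taylor[of i "zQ $ i" "zS $ i" "zQ' $ i" "zS' $ i"] assms(3,4) by simp
  then have "(\<Sum>i\<in>UNIV. row_cost i (zQ $ i) (zS $ i))
      = (\<Sum>i\<in>UNIV. row_cost i (zQ' $ i) (zS' $ i)) + Sq"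
    unfolding Sq_def by (simp add: sum.distrib)
  moreover have "obj_f c gam nu rho sig gP zQ' zS' \<le> obj_f c gam nu rho sig gP zQ zS"
    using assms(2) unfolding is_global_max_def by blast
  moreover have "gP / (2 * N^2) * penalty zQ zS \<ge> 0"
    using assms(1) penalty_nonneg by simp
  ultimately have "Sq / N \<le> gP / (2 * N^2) * penalty zQ' zS'"
    unfolding obj_f_eq N_def[symmetric] by (simp add: algebra_simps)
  with \<open>N > 0\<close> show ?thesis
    by (simp add: Sq_def N_def[symmetric] field_simps power2_eq_square)
qed

lemma global_max_deviation_bounds:
  assumes "\<And>j. \<bar>rho $ j\<bar> \<le> 1 - eps" and "eps > 0" and "gP \<ge> 0"
    and "is_global_max c gam nu rho sig gP zQ zS"
  shows "(zQ $ i $ j - zQ0 $ i $ j)^2 \<le> gP * (penalty zQ0 zS0 / (real CARD('n) * gam $ i * eps * (nu $ j)^2))"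
    and "(zS $ i - zS0 $ i)^2 \<le> gP * (penalty zQ0 zS0 / (real CARD('n) * gam $ i * eps * sig^2))"
proof -
  define B where "B = gP * penalty zQ0 zS0 / (2 * real CARD('n))"
  define dQ where "dQ = zQ $ i - zQ0 $ i"
  define dS where "dS = zS $ i - zS0 $ i"
  note lb = row_quad_lower_bound[OF assms(1)]
  have "0 \<le> row_quad i' d e" for i' d e
  proof -
    have "0 \<le> gam $ i' * eps / 2 * ((\<Sum>j\<in>UNIV. (nu $ j)^2 * (d $ j)^2) + sig^2 * e^2)"
      using gam_pos[of i'] assms(2) by (intro mult_nonneg_nonneg add_nonneg_nonneg sum_nonneg) auto
    then show ?thesis using lb[of i' d e] by linarith
  qed
  then have "row_quad i dQ dS \<le> (\<Sum>i'\<in>UNIV. row_quad i' (zQ $ i' - zQ0 $ i') (zS $ i' - zS0 $ i'))"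
    unfolding dQ_def dS_def by (intro member_le_sum) auto
  also have "\<dots> \<le> B"
    unfolding B_def using assms(3,4) zQ0_zS0_critical by (rule global_max_row_quad_sum_le)
  finally have quad_le: "gam $ i * eps / 2 * ((\<Sum>j\<in>UNIV. (nu $ j)^2 * (dQ $ j)^2) + sig^2 * dS^2) \<le> B"
    using lb[of i dQ dS] by linarith
  have "(nu $ j)^2 * (dQ $ j)^2 \<le> (\<Sum>j\<in>UNIV. (nu $ j)^2 * (dQ $ j)^2)"
    by (intro member_le_sum) auto
  then have "gam $ i * eps / 2 * ((nu $ j)^2 * (dQ $ j)^2)
      \<le> gam $ i * eps / 2 * ((\<Sum>j\<in>UNIV. (nu $ j)^2 * (dQ $ j)^2) + sig^2 * dS^2)"
    using gam_pos[of i] assms(2) by (intro mult_left_mono add_increasing2) auto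
  with quad_le have "gam $ i * eps / 2 * ((nu $ j)^2 * (dQ $ j)^2) \<le> B" by linarith
  with gam_pos[of i] nu_pos[of j] assms(2)
  show "(zQ $ i $ j - zQ0 $ i $ j)^2 \<le> gP * (penalty zQ0 zS0 / (real CARD('n) * gam $ i * eps * (nu $ j)^2))"
    by (simp add: dQ_def B_def field_simps)
  have "0 \<le> (\<Sum>j\<in>UNIV. (nu $ j)^2 * (dQ $ j)^2)" by (intro sum_nonneg) auto
  then have "gam $ i * eps / 2 * (sig^2 * dS^2)
      \<le> gam $ i * eps / 2 * ((\<Sum>j\<in>UNIV. (nu $ j)^2 * (dQ $ j)^2) + sig^2 * dS^2)"
    using gam_pos[of i] assms(2) by (intro mult_left_mono) auto
  with quad_le have "gam $ i * eps / 2 * (sig^2 * dS^2) \<le> B" by linarith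
  with gam_pos[of i] sig_pos assms(2)
  show "(zS $ i - zS0 $ i)^2 \<le> gP * (penalty zQ0 zS0 / (real CARD('n) * gam $ i * eps * sig^2))"
    by (simp add: dS_def B_def field_simps)
qed

lemma rho_margin: "\<exists>eps > 0. \<forall>j. \<bar>rho $ j\<bar> \<le> 1 - eps"
proof -
  define m where "m = Max (range (\<lambda>j. \<bar>rho $ j\<bar>))"
  have "m \<in> range (\<lambda>j. \<bar>rho $ j\<bar>)" unfolding m_def by (intro Max_in) auto
  then have "m < 1" using rho_bounds by (auto simp: abs_less_iff)
  moreover have "\<bar>rho $ j\<bar> \<le> m" for j unfolding m_def by (intro Max_ge) auto
  ultimately show ?thesis by (intro exI[of _ "1 - m"]) auto
qed

lemma eventually_global_max_sgn_eq:
  "\<forall>\<^sub>F gP in at_right 0. \<forall>zQ zS. is_global_max c gam nu rho sig gP zQ zS \<longrightarrow>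
      (\<forall>i j. zQ0 $ i $ j \<noteq> 0 \<longrightarrow> sgn (zQ $ i $ j) = sgn (zQ0 $ i $ j))
    \<and> (\<forall>i. zS0 $ i \<noteq> 0 \<longrightarrow> sgn (zS $ i) = sgn (zS0 $ i))"
proof -
  obtain eps where eps: "eps > 0" "\<And>j. \<bar>rho $ j\<bar> \<le> 1 - eps" using rho_margin by blast
  define KQ where "KQ i j = penalty zQ0 zS0 / (real CARD('n) * gam $ i * eps * (nu $ j)^2)" for i j
  define KS where "KS i = penalty zQ0 zS0 / (real CARD('n) * gam $ i * eps * sig^2)" for i
  have sgn_stable:
    "\<forall>\<^sub>F g in at_right 0. y0 \<noteq> 0 \<longrightarrow> (\<forall>y. (y - y0)^2 \<le> g * K \<longrightarrow> sgn y = sgn y0)"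
    for y0 K :: real
    by (cases "y0 = 0") (simp_all add: eventually_sq_dist_le_imp_sgn_eq)
  have "\<forall>\<^sub>F g in at_right 0. \<forall>i j. zQ0 $ i $ j \<noteq> 0 \<longrightarrow>
      (\<forall>y. (y - zQ0 $ i $ j)^2 \<le> g * KQ i j \<longrightarrow> sgn y = sgn (zQ0 $ i $ j))"
    by (intro eventually_all_finite sgn_stable)
  moreover have "\<forall>\<^sub>F g in at_right 0. \<forall>i. zS0 $ i \<noteq> 0 \<longrightarrow>
      (\<forall>y. (y - zS0 $ i)^2 \<le> g * KS i \<longrightarrow> sgn y = sgn (zS0 $ i))"
    by (intro eventually_all_finite sgn_stable)
  moreover have "\<forall>\<^sub>F g in at_right 0. (0::real) < g" by (rule eventually_at_right_less)
  ultimately show ?thesis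
  proof eventually_elim
    case (elim g)
    show ?case
    proof (intro allI impI conjI)
      fix zQ zS i j
      assume max: "is_global_max c gam nu rho sig g zQ zS"
      show "sgn (zQ $ i $ j) = sgn (zQ0 $ i $ j)" if "zQ0 $ i $ j \<noteq> 0"
        using elim global_max_deviation_bounds(1)[OF eps(2,1) _ max, of i j] that
        by (simp add: KQ_def)
      show "sgn (zS $ i) = sgn (zS0 $ i)" if "zS0 $ i \<noteq> 0"
        using elim global_max_deviation_bounds(2)[OF eps(2,1) _ max, of i] that
        by (simp add: KS_def)
    qed
  qed
qed

lemma sign_pattern_if_sgn_eq_zQ0_zS0:
  assumes Q: "\<forall>i j. zQ0 $ i $ j \<noteq> 0 \<longrightarrow> sgn (zQ $ i $ j) = sgn (zQ0 $ i $ j)"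
    and S: "\<forall>i. zS0 $ i \<noteq> 0 \<longrightarrow> sgn (zS $ i) = sgn (zS0 $ i)"
  shows "(\<forall>i. zQ $ i $ i > 0)
    \<and> (\<forall>i. rho $ i \<noteq> 0 \<longrightarrow> sgn (zS $ i) = - sgn (rho $ i))
    \<and> (\<forall>i j. i \<noteq> j \<and> rho $ i * rho $ j \<noteq> 0 \<longrightarrow> sgn (zQ $ i $ j) = sgn (rho $ i * rho $ j))"
proof (intro allI impI conjI)
  fix i j
  have "zQ0 $ i $ i > 0" using zQ0_diag_pos[of i] by (simp add: zQ0_diag_eq)
  with Q[rule_format, of i i] show "zQ $ i $ i > 0" by (simp add: sgn_1_pos)
  show "sgn (zS $ i) = - sgn (rho $ i)" if "rho $ i \<noteq> 0"
  proof -
    have "zS0 $ i \<noteq> 0" using that sgn_zS0[of i] by (auto simp: sgn_0_0)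
    with S[rule_format, of i] sgn_zS0[of i] show ?thesis by simp
  qed
  show "sgn (zQ $ i $ j) = sgn (rho $ i * rho $ j)" if "i \<noteq> j \<and> rho $ i * rho $ j \<noteq> 0"
  proof -
    have "zQ0 $ i $ j \<noteq> 0" using that sgn_zQ0_off_diag[of i j] by (auto simp: sgn_0_0)
    with Q[rule_format, of i j] sgn_zQ0_off_diag[of i j] that show ?thesis by simp
  qed
qed

end

theorem mainTheorem13:
  fixes c gam nu rho :: "real^'n" and sig :: real
  assumes "sig > 0"
    and "\<And>i. c $ i > 0" and "\<And>i. gam $ i > 0" and "\<And>i. nu $ i > 0"
    and "\<And>i. -1 < rho $ i \<and> rho $ i < 1"
  shows "\<exists>gbar > 0. \<forall>gP. 0 < gP \<and> gP < gbar \<longrightarrow>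
           (\<forall>zQ zS. is_global_max c gam nu rho sig gP zQ zS \<longrightarrow>
              (\<forall>i. zQ $ i $ i > 0)
            \<and> (\<forall>i. rho $ i \<noteq> 0 \<longrightarrow> sgn (zS $ i) = - sgn (rho $ i))
            \<and> (\<forall>i j. i \<noteq> j \<and> rho $ i * rho $ j \<noteq> 0 \<longrightarrow>
                   sgn (zQ $ i $ j) = sgn (rho $ i * rho $ j)))"
proof -
  interpret contract_model c gam nu rho sig
    using assms by unfold_locales
  have "\<forall>\<^sub>F gP in at_right 0. \<forall>zQ zS. is_global_max c gam nu rho sig gP zQ zS \<longrightarrow>
      (\<forall>i. zQ $ i $ i > 0)
    \<and> (\<forall>i. rho $ i \<noteq> 0 \<longrightarrow> sgn (zS $ i) = - sgn (rho $ i))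
    \<and> (\<forall>i j. i \<noteq> j \<and> rho $ i * rho $ j \<noteq> 0 \<longrightarrow> sgn (zQ $ i $ j) = sgn (rho $ i * rho $ j))"
    using eventually_global_max_sgn_eq
    by (rule eventually_mono) (intro allI impI sign_pattern_if_sgn_eq_zQ0_zS0; blast)
  then show ?thesis unfolding eventually_at_right_field by (simp only: imp_conjL)
qed

end
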